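(* Let $n_\text{in}, n_\text{out} \ge 1$, let $\mathbf{W}\in\mathbb{R}^{n_\text{out}\times n_\text{in}}$, $\mathbf{b}\in\mathbb{R}^{n_\text{out}}$, $\mathbf{c}\in\mathbb{R}^{n_\text{in}}$, and let $\mathbf{U}=[\mathbf{u}_1\,\mathbf{u}_2\,\ldots\,\mathbf{u}_{n_\text{in}}]\in\mathbb{R}^{n_\text{in}\times n_\text{in}}$. Consider the input parallelotope $\mathcal{P}(\mathbf{U})=\{\mathbf{c}+\sum_{j=1}^{n_\text{in}}\lambda_j\mathbf{u}_j:\lambda\in[0,1]^{n_\text{in}}\}$ and its pre-activation image $\mathcal{P}(\mathbf{V})=\{\mathbf{W}\mathbf{x}+\mathbf{b}:\mathbf{x}\in\mathcal{P}(\mathbf{U})\}$, where $\mathbf{V}=\mathbf{W}\mathbf{U}=[\mathbf{v}_1\,\ldots\,\mathbf{v}_{n_\text{in}}]$. Fix $r\in[0,1]$ and split $\mathcal{P}(\mathbf{U})$ along $\mathbf{u}_1$ into the ``left'' parallelotope $\mathcal{P}(\mathbf{U}^L)=\{\mathbf{c}+\lambda_1 r\mathbf{u}_1+\sum_{j\ge2}\lambda_j\mathbf{u}_j:\lambda\in[0,1]^{n_\text{in}}\}$ and the ``right'' parallelotope $\mathcal{P}(\mathbf{U}^R)=\{\mathbf{c}+r\mathbf{u}_1+\lambda_1(1-r)\mathbf{u}_1+\sum_{j\ge2}\lambda_j\mathbf{u}_j:\lambda\in[0,1]^{n_\text{in}}\}$, and let $\mathcal{P}(\mathbf{V}^L),\mathcal{P}(\mathbf{V}^R)$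 be their images under $\mathbf{x}\mapsto\mathbf{W}\mathbf{x}+\mathbf{b}$ (so $\mathbf{V}^L=\mathbf{W}\mathbf{U}^L$, $\mathbf{V}^R=\mathbf{W}\mathbf{U}^R$). Write $v_{j,i}$ for the $i$-th coordinate of $\mathbf{v}_j$ and $z_i=\sum_{j=2}^{n_\text{in}}|v_{j,i}|$. Then \[ V_\text{red}:=\mathrm{Vol}(\mathcal{B}(\mathbf{V}))-\mathrm{Vol}\big(\mathcal{B}(\mathbf{V}^L)\cup\mathcal{B}(\mathbf{V}^R)\big) =\sum_{k=2}^{n_\text{out}}\big(1-r^k-(1-r)^k\big)\sum_{C_i\in P_k(C)}\Big[\prod_{j\in C_i}|v_{1,j}|\Big]\prod_{t\in C\setminus C_i}z_t , \] where $C=\{1,\ldots,n_\text{out}\}$ and $P_k(C)$ is the set of subsets of $C$ with exactly $k$ elements.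
   Context: For a parallelotope $\mathcal{P}\subset\mathbb{R}^{n_\text{out}}$ (such as $\mathcal{P}(\mathbf{V})$), $\mathcal{B}(\cdot)$ denotes the smallest axis-aligned hyperrectangle containing it, i.e., the Cartesian product over coordinates $i$ of the interval between the minimal and maximal $i$-th coordinate of its vertices; $\mathrm{Vol}$ denotes $n_\text{out}$-dimensional Lebesgue volume. In particular $\mathrm{Vol}(\mathcal{B}(\mathbf{V}))=\prod_{i=1}^{n_\text{out}}\sum_{j=1}^{n_\text{in}}|v_{j,i}|$. *)

theory Defs
  imports "HOL-Analysis.Analysis"
begin

definition paral :: "real^'n \<Rightarrow> ('j::finite \<Rightarrow> real^'n) \<Rightarrow> (real^'n) set" where
  "paral c u = {c + (\<Sum>j\<in>UNIV. l j *\<^sub>R u j) | l. \<forall>j. 0 \<le> l j \<and> l j \<le> 1}"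

definition bbox :: "(real^'n) set \<Rightarrow> (real^'n) set" where
  "bbox S = cbox (\<chi> i. Inf ((\<lambda>y. y $ i) ` S)) (\<chi> i. Sup ((\<lambda>y. y $ i) ` S))"

end

theory Submission
  imports Defs
begin

(* In coordinate i the bounding box of the parallelotope with base p and generators g_j is the
   interval [p_i + sum_j min 0 (g_j)_i, p_i + sum_j max 0 (g_j)_i], of length sum_j |(g_j)_i|.
   The two halves of the split share all generators except the split one v_1, so in every coordinate
   their boxes overlap exactly in a translate of the box spanned by the remaining generators,
   of side z_i. Inclusion-exclusion gives the volume of the union, and expanding the products
   prod_i (s |v_{1,i}| + z_i) for s = 1, r, 1 - r over subsets of coordinates, a subset of size k
   contributes with weight 1 - r^k - (1 - r)^k; the empty set cancels against the overlap and
   singletons have weight 0. *)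

lemma sum_fun_upd_remove:
  assumes "finite A" and "j \<in> A"
  shows "(\<Sum>x\<in>A. f ((g(j := w)) x)) = f w + (\<Sum>x\<in>A - {j}. f (g x))"
  using assms by (simp add: sum.remove)

lemma sum_unit_interval_weights_bounds:
  fixes a :: "'j \<Rightarrow> real"
  assumes "\<forall>j\<in>A. 0 \<le> l j \<and> l j \<le> 1"
  shows "(\<Sum>j\<in>A. min 0 (a j)) \<le> (\<Sum>j\<in>A. l j * a j)"
    and "(\<Sum>j\<in>A. l j * a j) \<le> (\<Sum>j\<in>A. max 0 (a j))"
proof -
  have "min 0 (a j) \<le> l j * a j \<and> l j * a j \<le> max 0 (a j)" if "j \<in> A" for j
    using assms that mult_left_le_one_le[of "a j" "l j"] mult_left_le_one_le[of "- a j" "l j"]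
    by (cases "0 \<le> a j") (auto simp: mult_nonneg_nonpos)
  then show "(\<Sum>j\<in>A. min 0 (a j)) \<le> (\<Sum>j\<in>A. l j * a j)"
    and "(\<Sum>j\<in>A. l j * a j) \<le> (\<Sum>j\<in>A. max 0 (a j))"
    by (auto intro: sum_mono)
qed

lemma prod_add_split_defect:
  fixes a z :: "'o::finite \<Rightarrow> real" and r :: real
  shows "(\<Prod>i\<in>UNIV. a i + z i)
      - ((\<Prod>i\<in>UNIV. r * a i + z i) + (\<Prod>i\<in>UNIV. (1 - r) * a i + z i) - (\<Prod>i\<in>UNIV. z i))
    = (\<Sum>k = 2..CARD('o). (1 - r ^ k - (1 - r) ^ k) *
        (\<Sum>C\<in>{S :: 'o set. card S = k}. (\<Prod>i\<in>C. a i) * (\<Prod>t\<in>UNIV - C. z t)))"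
    (is "_ = (\<Sum>k = 2..CARD('o). ?h k)")
proof -
  define G where "G k = (\<Sum>C\<in>{S :: 'o set. card S = k}. (\<Prod>i\<in>C. a i) * (\<Prod>t\<in>UNIV - C. z t))" for k
  have expand: "(\<Prod>i\<in>UNIV. s * a i + z i) = (\<Sum>k = 0..CARD('o). s ^ k * G k)" for s
  proof -
    have "card ` (UNIV :: 'o set set) \<subseteq> {0..CARD('o)}"
      by (auto intro!: card_mono)
    then have "(\<Sum>C\<in>UNIV. s ^ card C * ((\<Prod>i\<in>C. a i) * (\<Prod>t\<in>UNIV - C. z t)))
        = (\<Sum>k = 0..CARD('o). s ^ k * G k)"
      using sum.group[of UNIV "{0..CARD('o)}" card "\<lambda>C. s ^ card C * ((\<Prod>i\<in>C. a i) * (\<Prod>t\<in>UNIV - C. z t))"]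
      by (simp add: G_def sum_distrib_left)
    then show ?thesis
      using prod_add[of UNIV "\<lambda>i. s * a i" z]
      by (simp add: prod.distrib mult.assoc)
  qed
  have full: "(\<Prod>i\<in>UNIV. a i + z i) = (\<Sum>k = 0..CARD('o). G k)"
    using expand[of 1] by simp
  have "(\<Sum>k = 0..CARD('o). ?h k) = (\<Sum>k = 0..CARD('o). G k)
      - ((\<Sum>k = 0..CARD('o). r ^ k * G k) + (\<Sum>k = 0..CARD('o). (1 - r) ^ k * G k))"
    by (simp add: G_def left_diff_distrib sum_subtractf sum.distrib)
  moreover have "CARD('o) \<noteq> 0"
    by simp
  then have "(\<Sum>k = 0..CARD('o). ?h k) = ?h 0 + ?h 1 + (\<Sum>k = 2..CARD('o). ?h k)"
    by (simp add: sum.atLeast_Suc_atMost numeral_2_eq_2)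
  moreover have "?h 0 = - (\<Prod>i\<in>UNIV. z i)" and "?h 1 = 0"
    by simp_all
  ultimately show ?thesis
    unfolding full expand by linarith
qed

lemma paral_eq_image:
  "paral p g = (\<lambda>l. p + (\<Sum>j\<in>UNIV. l j *\<^sub>R g j)) ` {l. \<forall>j. 0 \<le> l j \<and> l j \<le> 1}"
  unfolding paral_def by blast

lemma paral_affine_image:
  fixes W :: "real^'i^'o" and u :: "'j::finite \<Rightarrow> real^'i"
  shows "(\<lambda>x. W *v x + b) ` paral c u = paral (W *v c + b) (\<lambda>j. W *v u j)"
proof -
  have "W *v (c + (\<Sum>j\<in>UNIV. l j *\<^sub>R u j)) + b = (W *v c + b) + (\<Sum>j\<in>UNIV. l j *\<^sub>R (W *v u j))" for l
    by (simp add: linear_sum[OF matrix_vector_mul_linear] algebra_simps comp_def)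
  then show ?thesis
    unfolding paral_eq_image image_image by (simp add: ac_simps)
qed

lemma coordinate_image_paral:
  "(\<lambda>y. y $ i) ` paral p g = (\<lambda>l. p $ i + (\<Sum>j\<in>UNIV. l j * g j $ i)) ` {l. \<forall>j. 0 \<le> l j \<and> l j \<le> 1}"
  unfolding paral_eq_image image_image by simp

lemma bbox_paral:
  fixes p :: "real^'n" and g :: "'j::finite \<Rightarrow> real^'n"
  shows "bbox (paral p g) =
    cbox (\<chi> i. p $ i + (\<Sum>j\<in>UNIV. min 0 (g j $ i))) (\<chi> i. p $ i + (\<Sum>j\<in>UNIV. max 0 (g j $ i)))"
proof -
  let ?L = "{l. \<forall>j. 0 \<le> l j \<and> l j \<le> 1}"
  let ?f = "\<lambda>i l. p $ i + (\<Sum>j\<in>UNIV. l j * g j $ i)"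
  have "Inf (?f i ` ?L) = p $ i + (\<Sum>j\<in>UNIV. min 0 (g j $ i))" for i
  proof (rule cInf_eq_minimum)
    let ?l = "\<lambda>j. if g j $ i < 0 then 1 else (0::real)"
    have "p $ i + (\<Sum>j\<in>UNIV. min 0 (g j $ i)) = ?f i ?l"
      by (auto intro!: sum.cong)
    moreover have "?l \<in> ?L"
      by simp
    ultimately show "p $ i + (\<Sum>j\<in>UNIV. min 0 (g j $ i)) \<in> ?f i ` ?L"
      by (rule image_eqI)
  next
    fix x
    assume "x \<in> ?f i ` ?L"
    then obtain l where "\<forall>j. 0 \<le> l j \<and> l j \<le> 1" and "x = ?f i l"
      by blast
    then show "p $ i + (\<Sum>j\<in>UNIV. min 0 (g j $ i)) \<le> x"
      using sum_unit_interval_weights_bounds(1)[of UNIV l] by simp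
  qed
  moreover have "Sup (?f i ` ?L) = p $ i + (\<Sum>j\<in>UNIV. max 0 (g j $ i))" for i
  proof (rule cSup_eq_maximum)
    let ?l = "\<lambda>j. if g j $ i > 0 then 1 else (0::real)"
    have "p $ i + (\<Sum>j\<in>UNIV. max 0 (g j $ i)) = ?f i ?l"
      by (auto intro!: sum.cong)
    moreover have "?l \<in> ?L"
      by simp
    ultimately show "p $ i + (\<Sum>j\<in>UNIV. max 0 (g j $ i)) \<in> ?f i ` ?L"
      by (rule image_eqI)
  next
    fix x
    assume "x \<in> ?f i ` ?L"
    then obtain l where "\<forall>j. 0 \<le> l j \<and> l j \<le> 1" and "x = ?f i l"
      by blast
    then show "x \<le> p $ i + (\<Sum>j\<in>UNIV. max 0 (g j $ i))"
      using sum_unit_interval_weights_bounds(2)[of UNIV l] by simp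
  qed
  ultimately show ?thesis
    unfolding bbox_def coordinate_image_paral by simp
qed

lemma bbox_paral_fun_upd:
  fixes p :: "real^'n" and g :: "'j::finite \<Rightarrow> real^'n"
  shows "bbox (paral p (g(j1 := w))) =
    cbox (\<chi> i. p $ i + min 0 (w $ i) + (\<Sum>j\<in>UNIV - {j1}. min 0 (g j $ i)))
         (\<chi> i. p $ i + max 0 (w $ i) + (\<Sum>j\<in>UNIV - {j1}. max 0 (g j $ i)))"
proof -
  have lo: "(\<Sum>j\<in>UNIV. min 0 ((g(j1 := w)) j $ i)) = min 0 (w $ i) + (\<Sum>j\<in>UNIV - {j1}. min 0 (g j $ i))"
    and hi: "(\<Sum>j\<in>UNIV. max 0 ((g(j1 := w)) j $ i)) = max 0 (w $ i) + (\<Sum>j\<in>UNIV - {j1}. max 0 (g j $ i))"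
    for i
    by (rule sum_fun_upd_remove; simp)+
  show ?thesis
    unfolding bbox_paral lo hi add.assoc ..
qed

lemma measure_bbox_paral:
  fixes p :: "real^'n" and g :: "'j::finite \<Rightarrow> real^'n"
  shows "measure lebesgue (bbox (paral p g)) = (\<Prod>i\<in>UNIV. \<Sum>j\<in>UNIV. \<bar>g j $ i\<bar>)"
proof -
  let ?a = "\<chi> i. p $ i + (\<Sum>j\<in>UNIV. min 0 (g j $ i))"
  let ?b = "\<chi> i. p $ i + (\<Sum>j\<in>UNIV. max 0 (g j $ i))"
  have "?a \<in> cbox ?a ?b"
    by (simp add: mem_box_cart sum_mono)
  then have "measure lebesgue (cbox ?a ?b) = (\<Prod>i\<in>UNIV. ?b $ i - ?a $ i)"
    using content_cbox_cart[of ?a ?b] by auto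
  also have "\<dots> = (\<Prod>i\<in>UNIV. \<Sum>j\<in>UNIV. \<bar>g j $ i\<bar>)"
  proof -
    have "max 0 x - min 0 x = \<bar>x\<bar>" for x :: real
      by (simp add: max_def min_def)
    then show ?thesis
      by (simp add: sum_subtractf[symmetric])
  qed
  finally show ?thesis
    by (simp add: bbox_paral)
qed

lemma measure_bbox_paral_fun_upd:
  fixes p :: "real^'n" and g :: "'j::finite \<Rightarrow> real^'n"
  shows "measure lebesgue (bbox (paral p (g(j1 := w))))
    = (\<Prod>i\<in>UNIV. \<bar>w $ i\<bar> + (\<Sum>j\<in>UNIV - {j1}. \<bar>g j $ i\<bar>))"
proof -
  have "(\<Sum>j\<in>UNIV. \<bar>(g(j1 := w)) j $ i\<bar>) = \<bar>w $ i\<bar> + (\<Sum>j\<in>UNIV - {j1}. \<bar>g j $ i\<bar>)" for i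
    by (rule sum_fun_upd_remove) simp_all
  then show ?thesis
    by (simp only: measure_bbox_paral)
qed

lemma split_interval_overlap:
  fixes q m M r v :: real
  assumes "0 \<le> r" and "r \<le> 1"
  shows "max (q + min 0 (r * v) + m) (q + r * v + min 0 ((1 - r) * v) + m) = q + r * v + m"
    and "min (q + max 0 (r * v) + M) (q + r * v + max 0 ((1 - r) * v) + M) = q + r * v + M"
proof -
  have "0 \<le> r * v \<and> 0 \<le> (1 - r) * v \<or> r * v \<le> 0 \<and> (1 - r) * v \<le> 0"
    using assms by (cases "0 \<le> v") (simp_all add: mult_nonneg_nonpos)
  then show "max (q + min 0 (r * v) + m) (q + r * v + min 0 ((1 - r) * v) + m) = q + r * v + m"
    and "min (q + max 0 (r * v) + M) (q + r * v + max 0 ((1 - r) * v) + M) = q + r * v + M"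
    by (auto simp: max_def min_def)
qed

lemma bbox_paral_split_Int:
  fixes p :: "real^'n" and g :: "'j::finite \<Rightarrow> real^'n"
  assumes "0 \<le> r" and "r \<le> 1"
  shows "bbox (paral p (g(j1 := r *\<^sub>R g j1)))
           \<inter> bbox (paral (p + r *\<^sub>R g j1) (g(j1 := (1 - r) *\<^sub>R g j1)))
         = bbox (paral (p + r *\<^sub>R g j1) (g(j1 := 0)))"
  unfolding bbox_paral_fun_upd Int_interval_cart interval_cbox_cart
  by (simp add: vec_eq_iff split_interval_overlap[OF assms])

lemma measure_bbox_paral_split_Un:
  fixes p :: "real^'n" and g :: "'j::finite \<Rightarrow> real^'n"
  assumes "0 \<le> r" and "r \<le> 1"
  shows "measure lebesgue (bbox (paral p (g(j1 := r *\<^sub>R g j1)))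
           \<union> bbox (paral (p + r *\<^sub>R g j1) (g(j1 := (1 - r) *\<^sub>R g j1))))
    = (\<Prod>i\<in>UNIV. r * \<bar>g j1 $ i\<bar> + (\<Sum>j\<in>UNIV - {j1}. \<bar>g j $ i\<bar>))
      + (\<Prod>i\<in>UNIV. (1 - r) * \<bar>g j1 $ i\<bar> + (\<Sum>j\<in>UNIV - {j1}. \<bar>g j $ i\<bar>))
      - (\<Prod>i\<in>UNIV. \<Sum>j\<in>UNIV - {j1}. \<bar>g j $ i\<bar>)"
proof -
  have "bbox S \<in> lmeasurable" for S :: "(real^'n) set"
    by (simp add: bbox_def)
  then show ?thesis
    using assms
    by (simp add: measure_Un3 bbox_paral_split_Int measure_bbox_paral_fun_upd abs_mult)
qed

lemma measure_bbox_paral_split_reduction: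
  fixes p :: "real^'o" and g :: "'j::finite \<Rightarrow> real^'o"
  assumes "0 \<le> r" and "r \<le> 1"
  shows "measure lebesgue (bbox (paral p g))
      - measure lebesgue (bbox (paral p (g(j1 := r *\<^sub>R g j1)))
          \<union> bbox (paral (p + r *\<^sub>R g j1) (g(j1 := (1 - r) *\<^sub>R g j1))))
    = (\<Sum>k = 2..CARD('o). (1 - r ^ k - (1 - r) ^ k) *
        (\<Sum>C\<in>{S :: 'o set. card S = k}.
           (\<Prod>i\<in>C. \<bar>g j1 $ i\<bar>) * (\<Prod>t\<in>UNIV - C. \<Sum>j\<in>UNIV - {j1}. \<bar>g j $ t\<bar>)))"
  using measure_bbox_paral_fun_upd[of p g j1 "g j1"]
  by (simp add: measure_bbox_paral_split_Un[OF assms] prod_add_split_defect)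

theorem lemma1:
  fixes W :: "real^'i^'o" and b :: "real^'o" and c :: "real^'i"
    and U :: "real^'i^'i" and j1 :: 'i and r :: real
  assumes "0 \<le> r" and "r \<le> 1"
  shows
   "measure lebesgue (bbox ((\<lambda>x. W *v x + b) ` paral c (\<lambda>j. column j U)))
    - measure lebesgue
        (bbox ((\<lambda>x. W *v x + b) ` paral c ((\<lambda>j. column j U)(j1 := r *\<^sub>R column j1 U)))
         \<union> bbox ((\<lambda>x. W *v x + b) ` paral (c + r *\<^sub>R column j1 U)
                   ((\<lambda>j. column j U)(j1 := (1 - r) *\<^sub>R column j1 U))))
    = (\<Sum>k = 2..CARD('o).
        (1 - r ^ k - (1 - r) ^ k) *
        (\<Sum>Ci\<in>{S :: 'o set. card S = k}.
           (\<Prod>i\<in>Ci. \<bar>(W *v column j1 U) $ i\<bar>) *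
           (\<Prod>t\<in>UNIV - Ci. (\<Sum>j\<in>UNIV - {j1}. \<bar>(W *v column j U) $ t\<bar>))))"
proof -
  define g where "g j = W *v column j U" for j
  have full: "(\<lambda>x. W *v x + b) ` paral c (\<lambda>j. column j U) = paral (W *v c + b) g"
    by (simp add: paral_affine_image g_def[abs_def])
  have split: "(\<lambda>x. W *v x + b) ` paral q ((\<lambda>j. column j U)(j1 := s *\<^sub>R column j1 U))
      = paral (W *v q + b) (g(j1 := s *\<^sub>R g j1))" for q s
  proof -
    have "(\<lambda>j. W *v ((\<lambda>j. column j U)(j1 := s *\<^sub>R column j1 U)) j) = g(j1 := s *\<^sub>R g j1)"
      by (simp add: fun_eq_iff g_def matrix_vector_mult_scaleR)
    then show ?thesis
      by (simp add: paral_affine_image)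
  qed
  have shift: "W *v (c + r *\<^sub>R column j1 U) + b = (W *v c + b) + r *\<^sub>R g j1"
    by (simp add: g_def algebra_simps)
  show ?thesis
    unfolding full split shift g_def[symmetric]
    by (rule measure_bbox_paral_split_reduction[OF assms])
qed

end
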